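(* Consider the double integrator $\dot x_1=x_2$, $\dot x_2=u$ with $u\in U=[-1,1]$ and $Q=[-1,1]^2$, using the $\infty$-norm. Then $Q$ is not controlled invariant, and not controlled $\tau$-recurrent for any $\tau<2$, so $h_{\mathrm{inv}}(Q)=+\infty$ and $h_{\mathrm{rec}}(\tau,Q)=+\infty$ for $\tau<2$; moreover $Q$ is controlled $2$-recurrent and $h_{\mathrm{rec}}(\tau,Q)\le 2/\ln 2$ for all $\tau\ge2$.
   Context: Controls are piecewise continuous functions $\mathbb R_{\ge0}\to U$; $\xi(x,u,t)$ the solution; $N_\varepsilon(Q)=\{y:\exists x\in Q,\|x-y\|_\infty\le\varepsilon\}$; $\log$ base 2. Controlled invariant: for each $x\in Q$ some $u$ keeps $\xi(x,u,t)\in Q$ for all $t\ge0$. Controlled $\tau$-recurrent: for each $x\in Q$ some $u$ satisfies: for all $t\ge0$ there is $t'\in[t,t+\tau]$ with $\xi(x,u,t')\in Q$. A trajectory is $(T,\varepsilon,\tau,Q)$-recurrent if for every $t\in[0,T-\tau]$ there is $t'\in[t,t+\tau]$ with $\xi(x,u,t')\in N_\varepsilon(Q)$; $r_{\mathrm{rec}}(T,\varepsilon,\tau,Q)$ is the minimal cardinality of a set $S$ of controls such that every $x\in Q$ has some $u\in S$ making $\xi(x,u,\cdot)$ $(T,\varepsilon,\tau,Q)$-recurrent ($\infty$ if none), and $h_{\mathrm{rec}}(\tau,Q)=\lim_{\varepsilon\searrow0}\limsup_{T\to\infty}\frac1T\log r_{\mathrm{rec}}(T,\varepsilon,\tau,Q)$.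 Invariance entropy $h_{\mathrm{inv}}(Q)$ is defined analogously with the requirement $\xi(x,u,t)\in N_\varepsilon(Q)$ for all $t\in[0,T]$. *)

theory Defs
  imports "HOL-Analysis.Analysis" "HOL-Library.Extended_Nat" "HOL-Library.Extended_Real"
begin

definition piecewise_continuous :: "(real \<Rightarrow> real) \<Rightarrow> bool" where
  "piecewise_continuous u \<longleftrightarrow>
     (\<forall>T\<ge>0. \<exists>S. finite S \<and> continuous_on ({0..T} - S) u \<and>
        (\<forall>s\<in>S. (\<exists>l. (u \<longlongrightarrow> l) (at s within {0..<s})) \<and>
                (\<exists>r. (u \<longlongrightarrow> r) (at s within {s<..}))))"

definition admissible_controls :: "(real \<Rightarrow> real) set" where
  "admissible_controls = {u. piecewise_continuous u \<and> (\<forall>t\<ge>0. u t \<in> {-1..1})}"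

text \<open>The solution xi(x,u,t), written as the integral form of the ODE.\<close>
definition xi2 :: "real \<times> real \<Rightarrow> (real \<Rightarrow> real) \<Rightarrow> real \<Rightarrow> real" where
  "xi2 x u t = snd x + integral {0..t} u"

definition xi1 :: "real \<times> real \<Rightarrow> (real \<Rightarrow> real) \<Rightarrow> real \<Rightarrow> real" where
  "xi1 x u t = fst x + integral {0..t} (\<lambda>s. xi2 x u s)"

definition xi :: "real \<times> real \<Rightarrow> (real \<Rightarrow> real) \<Rightarrow> real \<Rightarrow> real \<times> real" where
  "xi x u t = (xi1 x u t, xi2 x u t)"

definition Q_box :: "(real \<times> real) set" where
  "Q_box = {-1..1} \<times> {-1..1}"

definition nbhd :: "real \<Rightarrow> (real \<times> real) set \<Rightarrow> (real \<times> real) set" where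
  "nbhd \<epsilon> Q = {y. \<exists>x\<in>Q. max \<bar>fst x - fst y\<bar> \<bar>snd x - snd y\<bar> \<le> \<epsilon>}"

definition controlled_invariant :: "(real \<times> real) set \<Rightarrow> bool" where
  "controlled_invariant Q \<longleftrightarrow>
     (\<forall>x\<in>Q. \<exists>u\<in>admissible_controls. \<forall>t\<ge>0. xi x u t \<in> Q)"

definition controlled_recurrent :: "real \<Rightarrow> (real \<times> real) set \<Rightarrow> bool" where
  "controlled_recurrent \<tau> Q \<longleftrightarrow>
     (\<forall>x\<in>Q. \<exists>u\<in>admissible_controls. \<forall>t\<ge>0. \<exists>t'\<in>{t..t+\<tau>}. xi x u t' \<in> Q)"

definition rec_traj :: "real \<Rightarrow> real \<Rightarrow> real \<Rightarrow> (real \<times> real) set \<Rightarrow> real \<times> real \<Rightarrow> (real \<Rightarrow> real) \<Rightarrow> bool" where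
  "rec_traj T \<epsilon> \<tau> Q x u \<longleftrightarrow>
     (\<forall>t\<in>{0..T-\<tau>}. \<exists>t'\<in>{t..t+\<tau>}. xi x u t' \<in> nbhd \<epsilon> Q)"

definition inv_traj :: "real \<Rightarrow> real \<Rightarrow> (real \<times> real) set \<Rightarrow> real \<times> real \<Rightarrow> (real \<Rightarrow> real) \<Rightarrow> bool" where
  "inv_traj T \<epsilon> Q x u \<longleftrightarrow> (\<forall>t\<in>{0..T}. xi x u t \<in> nbhd \<epsilon> Q)"

definition ecard :: "'a set \<Rightarrow> enat" where
  "ecard S = (if finite S then enat (card S) else \<infinity>)"

text \<open>Minimal cardinality of a spanning set of controls; Inf of the empty set is \<infinity>.\<close>
definition r_rec :: "real \<Rightarrow> real \<Rightarrow> real \<Rightarrow> (real \<times> real) set \<Rightarrow> enat" where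
  "r_rec T \<epsilon> \<tau> Q = (INF S \<in> {S. S \<subseteq> admissible_controls \<and>
                          (\<forall>x\<in>Q. \<exists>u\<in>S. rec_traj T \<epsilon> \<tau> Q x u)}. ecard S)"

definition r_inv :: "real \<Rightarrow> real \<Rightarrow> (real \<times> real) set \<Rightarrow> enat" where
  "r_inv T \<epsilon> Q = (INF S \<in> {S. S \<subseteq> admissible_controls \<and>
                          (\<forall>x\<in>Q. \<exists>u\<in>S. inv_traj T \<epsilon> Q x u)}. ecard S)"

definition elog2 :: "enat \<Rightarrow> ereal" where
  "elog2 n = (case n of enat k \<Rightarrow> ereal (log 2 (real k)) | \<infinity> \<Rightarrow> \<infinity>)"

definition h_rec :: "real \<Rightarrow> (real \<times> real) set \<Rightarrow> ereal" where
  "h_rec \<tau> Q = Lim (at_right 0)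
     (\<lambda>\<epsilon>. Limsup at_top (\<lambda>T. ereal (1 / T) * elog2 (r_rec T \<epsilon> \<tau> Q)))"

definition h_inv :: "(real \<times> real) set \<Rightarrow> ereal" where
  "h_inv Q = Lim (at_right 0)
     (\<lambda>\<epsilon>. Limsup at_top (\<lambda>T. ereal (1 / T) * elog2 (r_inv T \<epsilon> Q)))"

end

(*
  The corner (1, 1) moves outward at unit speed, and even under full braking its position
  is at least 1 + t - t^2/2, which exceeds 1 on the whole interval (0, 2). So whatever the
  control, during a time window of length tau < 2 placed inside (0, 2) this trajectory stays
  a fixed distance away from Q: Q is neither controlled invariant nor tau-recurrent, and for
  small eps no set of controls spans, so both entropies are infinite.

  Conversely, from (a, b) in Q with b >= 0 one brakes to rest, immediately if a <= 0, and after
  first reversing to (a, -b) in time 2b if a >= 0; either way the state stays in Q from time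
  2b <= 2 on (b < 0 follows by the symmetry (x, u) -> (-x, -u)). Trajectories under a common
  control drift apart at most linearly in time, so the controls of the points of a grid of
  mesh eps/(T + 1) in Q span; there are O(T^2) of them, hence h_rec tau Q = 0 for tau >= 2,
  which is sharper than the bound 2 / ln 2.
*)

theory Submission
  imports Defs "HOL-Real_Asymp.Real_Asymp"
begin

section \<open>Solutions of the double integrator\<close>

lemma admissible_control_integrable:
  assumes "u \<in> admissible_controls" "0 \<le> T"
  shows "u integrable_on {0..T}"
proof -
  from assms obtain S where S: "finite S" "continuous_on ({0..T} - S) u"
    unfolding admissible_controls_def piecewise_continuous_def by blast
  have bounded: "\<forall>t\<ge>0. u t \<in> {-1..1}"
    using assms unfolding admissible_controls_def by auto
  have negl: "negligible S" using S(1) by (rule negligible_finite)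
  have meas: "{0..T} - S \<in> sets lebesgue"
    using negl by (intro sets.Diff) (auto intro: negligible_imp_sets)
  have "u \<in> borel_measurable (lebesgue_on ({0..T} - S))"
    by (rule continuous_imp_measurable_on_sets_lebesgue[OF S(2) meas])
  moreover have "(\<lambda>_. 1::real) integrable_on {0..T} - S"
    by (rule integrable_spike_set[where S="{0..T}"]) (auto intro: negligible_subset[OF negl])
  ultimately have "u integrable_on {0..T} - S"
    by (rule measurable_bounded_by_integrable_imp_integrable_real[OF _ _ _ meas]) (use bounded in auto)
  then show ?thesis
    by (rule integrable_spike_set) (auto intro: negligible_subset[OF negl])
qed

lemma xi1_0 [simp]: "xi1 x u 0 = fst x"
  and xi2_0 [simp]: "xi2 x u 0 = snd x"
  unfolding xi1_def xi2_def by simp_all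

lemma continuous_on_xi2:
  assumes "u \<in> admissible_controls" "0 \<le> T"
  shows "continuous_on {0..T} (xi2 x u)"
  unfolding xi2_def
  by (intro continuous_intros indefinite_integral_continuous_1 admissible_control_integrable assms)

lemma xi2_integrable:
  assumes "u \<in> admissible_controls" "0 \<le> T"
  shows "xi2 x u integrable_on {0..T}"
  by (rule integrable_continuous_interval[OF continuous_on_xi2[OF assms]])

lemma has_integral_affine:
  fixes t0 t :: real
  assumes "t0 \<le> t"
  shows "((\<lambda>r. A + c * (r - t0)) has_integral A * (t - t0) + c * (t - t0)^2 / 2) {t0..t}"
proof -
  have "((\<lambda>r. A * (r - t0) + c * (r - t0)^2 / 2) has_real_derivative A + c * (r - t0))
          (at r within {t0..t})" for r
    by (rule derivative_eq_intros refl | simp)+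
  then have "((\<lambda>r. A * (r - t0) + c * (r - t0)^2 / 2) has_vector_derivative A + c * (r - t0))
          (at r within {t0..t})" for r
    by (simp only: has_real_derivative_iff_has_vector_derivative)
  from fundamental_theorem_of_calculus[OF assms this] show ?thesis by simp
qed

lemma xi2_bounds:
  assumes "u \<in> admissible_controls" "0 \<le> t"
  shows "\<bar>xi2 x u t - snd x\<bar> \<le> t"
proof -
  have bounded: "\<forall>s\<ge>0. u s \<in> {-1..1}"
    using assms unfolding admissible_controls_def by auto
  have int: "u integrable_on {0..t}" by (rule admissible_control_integrable[OF assms])
  have "integral {0..t} (\<lambda>_. -1::real) \<le> integral {0..t} u"
    by (rule integral_le) (use bounded int in auto)
  moreover have "integral {0..t} u \<le> integral {0..t} (\<lambda>_. 1::real)"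
    by (rule integral_le) (use bounded int in auto)
  ultimately show ?thesis using assms(2) unfolding xi2_def by simp
qed

lemma xi1_lower_bound:
  assumes "u \<in> admissible_controls" "0 \<le> t"
  shows "fst x + snd x * t - t^2 / 2 \<le> xi1 x u t"
proof -
  note braking = has_integral_affine[OF assms(2), of "snd x" "-1"]
  have "integral {0..t} (\<lambda>r. snd x + (-1) * (r - 0)) \<le> integral {0..t} (xi2 x u)"
  proof (rule integral_le)
    show "(\<lambda>r. snd x + (-1) * (r - 0)) integrable_on {0..t}" using braking by blast
    show "xi2 x u integrable_on {0..t}" by (rule xi2_integrable[OF assms])
    show "snd x + (-1) * (r - 0) \<le> xi2 x u r" if "r \<in> {0..t}" for r
      using xi2_bounds[OF assms(1), of r x] that by simp
  qed
  with integral_unique[OF braking] show ?thesis unfolding xi1_def by simp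
qed

lemma xi1_difference:
  assumes "u \<in> admissible_controls" "0 \<le> t"
  shows "xi1 x u t - xi1 y u t = (fst x - fst y) + (snd x - snd y) * t"
proof -
  have "integral {0..t} (xi2 x u) = integral {0..t} (\<lambda>s. xi2 y u s + (snd x - snd y))"
    unfolding xi2_def by (simp add: algebra_simps)
  also have "\<dots> = integral {0..t} (xi2 y u) + integral {0..t} (\<lambda>_. snd x - snd y)"
    by (rule integral_add) (use xi2_integrable[OF assms] in auto)
  finally show ?thesis using assms(2) unfolding xi1_def by simp
qed

lemma xi_constant_control:
  assumes "u \<in> admissible_controls" "0 \<le> t0" "t0 \<le> t" "\<forall>r\<in>{t0<..<t}. u r = c"
  shows "xi2 x u t = xi2 x u t0 + c * (t - t0)"
    and "xi1 x u t = xi1 x u t0 + xi2 x u t0 * (t - t0) + c * (t - t0)^2 / 2"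
proof -
  have velocity: "xi2 x u r = xi2 x u t0 + c * (r - t0)" if "t0 \<le> r" "r \<le> t" for r
  proof -
    have "integral {0..r} u = integral {0..t0} u + integral {t0..r} u"
      by (rule Henstock_Kurzweil_Integration.integral_combine[symmetric])
        (use assms that in \<open>auto intro: admissible_control_integrable\<close>)
    moreover have "integral {t0..r} u = integral {t0..r} (\<lambda>_. c)"
      by (rule integral_spike[where S="{t0,r}"]) (use assms that in auto)
    moreover have "integral {t0..r} (\<lambda>_. c) = c * (r - t0)" using that by simp
    ultimately show ?thesis unfolding xi2_def by simp
  qed
  then show "xi2 x u t = xi2 x u t0 + c * (t - t0)" using assms(3) by blast
  have "integral {0..t} (xi2 x u) = integral {0..t0} (xi2 x u) + integral {t0..t} (xi2 x u)"
    by (rule Henstock_Kurzweil_Integration.integral_combine[symmetric])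
      (use assms in \<open>auto intro: xi2_integrable\<close>)
  also have "integral {t0..t} (xi2 x u) = integral {t0..t} (\<lambda>r. xi2 x u t0 + c * (r - t0))"
    by (rule integral_cong) (auto intro: velocity)
  also have "\<dots> = xi2 x u t0 * (t - t0) + c * (t - t0)^2 / 2"
    by (rule integral_unique[OF has_integral_affine[OF assms(3)]])
  finally show "xi1 x u t = xi1 x u t0 + xi2 x u t0 * (t - t0) + c * (t - t0)^2 / 2"
    unfolding xi1_def by simp
qed

lemma xi_at_rest:
  assumes "u \<in> admissible_controls" "0 \<le> t0" "t0 \<le> t" "\<forall>r\<in>{t0<..<t}. u r = 0"
    and "xi2 x u t0 = 0"
  shows "xi x u t = xi x u t0"
  using xi_constant_control[OF assms(1-4)] assms(5) by (simp add: xi_def)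

lemma xi_uminus: "xi (- x) (\<lambda>t. - u t) t = - xi x u t"
proof -
  have "xi2 (- x) (\<lambda>t. - u t) = (\<lambda>s. - xi2 x u s)"
    unfolding xi2_def by (simp add: fun_eq_iff)
  then show ?thesis unfolding xi_def xi1_def by simp
qed

section \<open>Piecewise constant controls\<close>

lemma piecewise_continuousI:
  assumes "finite S" "\<And>t. t \<notin> S \<Longrightarrow> isCont u t"
    and "\<And>s. s \<in> S \<Longrightarrow> \<exists>l. (u \<longlongrightarrow> l) (at_left s)"
    and "\<And>s. s \<in> S \<Longrightarrow> \<exists>r. (u \<longlongrightarrow> r) (at_right s)"
  shows "piecewise_continuous u"
  unfolding piecewise_continuous_def
proof (intro allI impI exI[of _ S] conjI ballI)
  fix T :: real
  show "finite S" by fact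
  show "continuous_on ({0..T} - S) u"
    by (rule continuous_at_imp_continuous_on) (use assms(2) in auto)
next
  fix s assume "s \<in> S"
  then obtain l where l: "(u \<longlongrightarrow> l) (at s within {..<s})" using assms(3) by blast
  show "\<exists>l. (u \<longlongrightarrow> l) (at s within {0..<s})"
    by (intro exI[of _ l] tendsto_within_subset[OF l]) auto
next
  fix s assume "s \<in> S"
  then show "\<exists>r. (u \<longlongrightarrow> r) (at s within {s<..})" by (rule assms(4))
qed

lemma piecewise_continuous_uminus:
  assumes "piecewise_continuous u"
  shows "piecewise_continuous (\<lambda>t. - u t)"
  unfolding piecewise_continuous_def
proof (intro allI impI)
  fix T :: real assume "0 \<le> T"
  then obtain S where "finite S" "continuous_on ({0..T} - S) u"
    "\<forall>s\<in>S. (\<exists>l. (u \<longlongrightarrow> l) (at s within {0..<s})) \<and> (\<exists>r. (u \<longlongrightarrow> r) (at s within {s<..}))"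
    using assms unfolding piecewise_continuous_def by blast
  then show "\<exists>S. finite S \<and> continuous_on ({0..T} - S) (\<lambda>t. - u t) \<and>
      (\<forall>s\<in>S. (\<exists>l. ((\<lambda>t. - u t) \<longlongrightarrow> l) (at s within {0..<s})) \<and>
              (\<exists>r. ((\<lambda>t. - u t) \<longlongrightarrow> r) (at s within {s<..})))"
    by (intro exI[of _ S]) (blast intro: continuous_on_minus tendsto_minus)
qed

lemma admissible_controls_uminus:
  "u \<in> admissible_controls \<Longrightarrow> (\<lambda>t. - u t) \<in> admissible_controls"
  unfolding admissible_controls_def by (auto intro: piecewise_continuous_uminus)

definition step_control :: "real \<Rightarrow> real \<Rightarrow> real \<Rightarrow> real \<Rightarrow> real \<Rightarrow> real \<Rightarrow> real" where
  "step_control p q c1 c2 c3 t = (if t \<le> p then c1 else if t \<le> q then c2 else c3)"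

lemma step_control_at_left:
  "eventually (\<lambda>y. step_control p q c1 c2 c3 y = step_control p q c1 c2 c3 s) (at_left s)"
proof -
  define b where "b = (if s \<le> p then s - 1 else if s \<le> q then p else max p q)"
  have "b < s" by (auto simp: b_def)
  then show ?thesis
    by (rule eventually_mono[OF eventually_at_left_real]) (auto simp: b_def step_control_def)
qed

lemma step_control_at_right:
  "eventually (\<lambda>y. step_control p q c1 c2 c3 y = (if s < p then c1 else if s < q then c2 else c3))
     (at_right s)"
proof -
  define b where "b = (if s < p then p else if s < q then q else s + 1)"
  have "s < b" by (auto simp: b_def)
  then show ?thesis
    by (rule eventually_mono[OF eventually_at_right_real]) (auto simp: b_def step_control_def)
qed

lemma step_control_admissible:
  assumes "p \<le> q" "c1 \<in> {-1..1}" "c2 \<in> {-1..1}" "c3 \<in> {-1..1}"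
  shows "step_control p q c1 c2 c3 \<in> admissible_controls"
proof -
  let ?u = "step_control p q c1 c2 c3"
  have "isCont ?u t" if "t \<notin> {p, q}" for t
  proof -
    have "(if t < p then c1 else if t < q then c2 else c3) = ?u t"
      using that assms(1) by (auto simp: step_control_def)
    then have "eventually (\<lambda>y. ?u y = ?u t) (at t)"
      using step_control_at_left[of p q c1 c2 c3 t] step_control_at_right[of p q c1 c2 c3 t]
      by (simp add: eventually_at_split)
    then show ?thesis unfolding continuous_at by (rule tendsto_eventually)
  qed
  moreover have "\<exists>l. (?u \<longlongrightarrow> l) (at_left s)" for s
    using step_control_at_left by (blast intro: tendsto_eventually)
  moreover have "\<exists>r. (?u \<longlongrightarrow> r) (at_right s)" for s
    using step_control_at_right by (blast intro: tendsto_eventually)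
  ultimately have "piecewise_continuous ?u"
    by (intro piecewise_continuousI[of "{p, q}"]) auto
  moreover have "?u t \<in> {-1..1}" for t
    using assms by (simp add: step_control_def)
  ultimately show ?thesis unfolding admissible_controls_def by auto
qed

section \<open>Escape from the corner\<close>

lemma corner_mem_Q_box: "(1, 1) \<in> Q_box"
  unfolding Q_box_def by auto

lemma subset_nbhd: "0 \<le> \<epsilon> \<Longrightarrow> Q \<subseteq> nbhd \<epsilon> Q"
  unfolding nbhd_def by force

lemma nbhd_mono: "\<epsilon> \<le> \<epsilon>' \<Longrightarrow> Q \<subseteq> Q' \<Longrightarrow> nbhd \<epsilon> Q \<subseteq> nbhd \<epsilon>' Q'"
  unfolding nbhd_def by (auto 4 3 intro: order_trans)

lemma fst_le_of_mem_nbhd_Q_box: "y \<in> nbhd \<epsilon> Q_box \<Longrightarrow> fst y \<le> 1 + \<epsilon>"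
  unfolding nbhd_def Q_box_def by auto

lemma corner_window_outside_nbhd:
  assumes "\<tau> < 2"
  obtains t0 \<epsilon>0 where "0 \<le> t0" "t0 + \<tau> \<le> 2" "0 < \<epsilon>0"
    "\<And>u t \<epsilon>. u \<in> admissible_controls \<Longrightarrow> t \<in> {t0..t0 + \<tau>} \<Longrightarrow> \<epsilon> < \<epsilon>0 \<Longrightarrow>
       xi (1, 1) u t \<notin> nbhd \<epsilon> Q_box"
proof -
  define m where "m = min 1 ((2 - \<tau>) / 2)"
  \<comment> \<open>the window [m, m + \<tau>] lies in [m, 2 - m], where t - t^2/2 \<ge> m (2 - m) / 2\<close>
  have m: "0 < m" "m \<le> 1" "m + \<tau> \<le> 2 - m" using assms by (auto simp: m_def min_def field_simps)
  show thesis
  proof (rule that[of m "m * (2 - m) / 2"])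
    show "0 \<le> m" "m + \<tau> \<le> 2" "0 < m * (2 - m) / 2" using m by auto
    fix u t \<epsilon>
    assume u: "u \<in> admissible_controls" and t: "t \<in> {m..m + \<tau>}" and \<epsilon>: "\<epsilon> < m * (2 - m) / 2"
    have "0 \<le> (t - m) * (2 - m - t)" using t m by (intro mult_nonneg_nonneg) auto
    then have "m * (2 - m) / 2 \<le> t - t^2 / 2" by (simp add: power2_eq_square field_simps)
    moreover have "1 + 1 * t - t^2 / 2 \<le> xi1 (1, 1) u t"
      using xi1_lower_bound[OF u, of t "(1, 1)"] t m by simp
    ultimately have "1 + \<epsilon> < fst (xi (1, 1) u t)" using \<epsilon> by (simp add: xi_def)
    then show "xi (1, 1) u t \<notin> nbhd \<epsilon> Q_box" using fst_le_of_mem_nbhd_Q_box by fastforce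
  qed
qed

lemma not_controlled_recurrent_Q_box:
  assumes "\<tau> < 2"
  shows "\<not> controlled_recurrent \<tau> Q_box"
proof
  assume "controlled_recurrent \<tau> Q_box"
  then obtain u where u: "u \<in> admissible_controls"
    and recurrent: "\<forall>t\<ge>0. \<exists>t'\<in>{t..t + \<tau>}. xi (1, 1) u t' \<in> Q_box"
    using corner_mem_Q_box unfolding controlled_recurrent_def by blast
  obtain t0 \<epsilon>0 where "0 \<le> t0" "t0 + \<tau> \<le> 2" "0 < \<epsilon>0"
    and outside: "\<And>u t \<epsilon>. u \<in> admissible_controls \<Longrightarrow> t \<in> {t0..t0 + \<tau>} \<Longrightarrow> \<epsilon> < \<epsilon>0 \<Longrightarrow>
       xi (1, 1) u t \<notin> nbhd \<epsilon> Q_box"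
    using corner_window_outside_nbhd[OF assms] by blast
  then show False using recurrent outside[OF u, of _ 0] subset_nbhd[of 0 Q_box] by blast
qed

lemma controlled_invariant_imp_recurrent:
  "controlled_invariant Q \<Longrightarrow> 0 \<le> \<tau> \<Longrightarrow> controlled_recurrent \<tau> Q"
  unfolding controlled_invariant_def controlled_recurrent_def
  by (metis atLeastAtMost_iff le_add_same_cancel1 order_refl)

lemma not_controlled_invariant_Q_box: "\<not> controlled_invariant Q_box"
proof
  assume "controlled_invariant Q_box"
  then have "controlled_recurrent 0 Q_box" by (rule controlled_invariant_imp_recurrent) simp
  then show False using not_controlled_recurrent_Q_box[of 0] by simp
qed

lemma r_rec_eq_infinity:
  assumes "x \<in> Q" "\<And>u. u \<in> admissible_controls \<Longrightarrow> \<not> rec_traj T \<epsilon> \<tau> Q x u"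
  shows "r_rec T \<epsilon> \<tau> Q = \<infinity>"
proof -
  have no_cover: "{S. S \<subseteq> admissible_controls \<and> (\<forall>x\<in>Q. \<exists>u\<in>S. rec_traj T \<epsilon> \<tau> Q x u)} = {}"
    using assms by blast
  show ?thesis unfolding r_rec_def no_cover by (simp add: top_enat_def)
qed

lemma r_rec_le_r_inv:
  assumes "0 \<le> \<tau>"
  shows "r_rec T \<epsilon> \<tau> Q \<le> r_inv T \<epsilon> Q"
proof -
  have "rec_traj T \<epsilon> \<tau> Q x u" if "inv_traj T \<epsilon> Q x u" for x u
    using that assms unfolding rec_traj_def inv_traj_def by force
  then show ?thesis unfolding r_rec_def r_inv_def by (intro INF_superset_mono) blast+
qed

lemma r_rec_Q_box_infinite:
  assumes "\<tau> < 2"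
  obtains \<epsilon>0 where "0 < \<epsilon>0" "\<And>\<epsilon> T. \<epsilon> < \<epsilon>0 \<Longrightarrow> 2 \<le> T \<Longrightarrow> r_rec T \<epsilon> \<tau> Q_box = \<infinity>"
proof -
  obtain t0 \<epsilon>0 where t0: "0 \<le> t0" "t0 + \<tau> \<le> 2" and "0 < \<epsilon>0"
    and outside: "\<And>u t \<epsilon>. u \<in> admissible_controls \<Longrightarrow> t \<in> {t0..t0 + \<tau>} \<Longrightarrow> \<epsilon> < \<epsilon>0 \<Longrightarrow>
       xi (1, 1) u t \<notin> nbhd \<epsilon> Q_box"
    using corner_window_outside_nbhd[OF assms] by blast
  have "r_rec T \<epsilon> \<tau> Q_box = \<infinity>" if "\<epsilon> < \<epsilon>0" "2 \<le> T" for \<epsilon> T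
  proof (rule r_rec_eq_infinity[OF corner_mem_Q_box])
    fix u assume "u \<in> admissible_controls"
    moreover have "t0 \<in> {0..T - \<tau>}" using t0 that by auto
    ultimately show "\<not> rec_traj T \<epsilon> \<tau> Q_box (1, 1) u"
      using outside that(1) unfolding rec_traj_def by blast
  qed
  with \<open>0 < \<epsilon>0\<close> show thesis by (rule that)
qed

lemma r_inv_Q_box_infinite:
  obtains \<epsilon>0 where "0 < \<epsilon>0" "\<And>\<epsilon> T. \<epsilon> < \<epsilon>0 \<Longrightarrow> 2 \<le> T \<Longrightarrow> r_inv T \<epsilon> Q_box = \<infinity>"
proof -
  obtain \<epsilon>0 where "0 < \<epsilon>0" "\<And>\<epsilon> T. \<epsilon> < \<epsilon>0 \<Longrightarrow> 2 \<le> T \<Longrightarrow> r_rec T \<epsilon> 0 Q_box = \<infinity>"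
    using r_rec_Q_box_infinite[of 0] by auto
  with r_rec_le_r_inv[of 0] show thesis
    by (metis that order_refl top.extremum_uniqueI top_enat_def)
qed

lemma Lim_Limsup_log_growth_eq_infinity:
  fixes r :: "real \<Rightarrow> real \<Rightarrow> enat"
  assumes "0 < \<epsilon>0" "\<And>\<epsilon> T. \<epsilon> < \<epsilon>0 \<Longrightarrow> T0 \<le> T \<Longrightarrow> r \<epsilon> T = \<infinity>"
  shows "Lim (at_right 0) (\<lambda>\<epsilon>. Limsup at_top (\<lambda>T. ereal (1 / T) * elog2 (r \<epsilon> T))) = \<infinity>"
proof (rule tendsto_Lim)
  have Limsup_infinite: "Limsup at_top (\<lambda>T. ereal (1 / T) * elog2 (r \<epsilon> T)) = \<infinity>"
    if "\<epsilon> < \<epsilon>0" for \<epsilon>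
  proof (rule lim_imp_Limsup)
    have "\<forall>\<^sub>F T in at_top. ereal (1 / T) * elog2 (r \<epsilon> T) = \<infinity>"
      using eventually_ge_at_top[of "max T0 1"]
      by (rule eventually_mono) (use assms(2) that in \<open>auto simp: elog2_def\<close>)
    then show "((\<lambda>T. ereal (1 / T) * elog2 (r \<epsilon> T)) \<longlongrightarrow> \<infinity>) at_top"
      by (rule tendsto_eventually)
  qed simp
  have "\<forall>\<^sub>F \<epsilon> in at_right 0. Limsup at_top (\<lambda>T. ereal (1 / T) * elog2 (r \<epsilon> T)) = \<infinity>"
    using eventually_at_right_real[OF assms(1)] by (rule eventually_mono) (auto intro: Limsup_infinite)
  then show "((\<lambda>\<epsilon>. Limsup at_top (\<lambda>T. ereal (1 / T) * elog2 (r \<epsilon> T))) \<longlongrightarrow> \<infinity>) (at_right 0)"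
    by (rule tendsto_eventually)
qed simp

lemma h_rec_Q_box_infinite:
  assumes "\<tau> < 2"
  shows "h_rec \<tau> Q_box = \<infinity>"
proof -
  obtain \<epsilon>0 where "0 < \<epsilon>0" "\<And>\<epsilon> T. \<epsilon> < \<epsilon>0 \<Longrightarrow> 2 \<le> T \<Longrightarrow> r_rec T \<epsilon> \<tau> Q_box = \<infinity>"
    using r_rec_Q_box_infinite[OF assms] by blast
  then show ?thesis
    unfolding h_rec_def by (intro Lim_Limsup_log_growth_eq_infinity[where r = "\<lambda>\<epsilon> T. r_rec T \<epsilon> \<tau> Q_box"])
qed

lemma h_inv_Q_box_infinite: "h_inv Q_box = \<infinity>"
proof -
  obtain \<epsilon>0 where "0 < \<epsilon>0" "\<And>\<epsilon> T. \<epsilon> < \<epsilon>0 \<Longrightarrow> 2 \<le> T \<Longrightarrow> r_inv T \<epsilon> Q_box = \<infinity>"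
    using r_inv_Q_box_infinite by blast
  then show ?thesis
    unfolding h_inv_def by (intro Lim_Limsup_log_growth_eq_infinity[where r = "\<lambda>\<epsilon> T. r_inv T \<epsilon> Q_box"])
qed

section \<open>Steering into the box within time 2\<close>

lemma braking_distance_bounds:
  fixes b w :: real
  assumes "0 \<le> w" "w \<le> b" "b \<le> 1"
  shows "0 \<le> b * w - w^2 / 2" "b * w - w^2 / 2 \<le> 1"
proof -
  have "w * w \<le> b * w" "b * w \<le> 1" "0 \<le> w * w"
    using assms by (auto intro: mult_right_mono mult_le_one)
  then show "0 \<le> b * w - w^2 / 2" "b * w - w^2 / 2 \<le> 1"
    unfolding power2_eq_square by linarith+
qed

lemma Q_box_kept_by_braking:
  assumes "(a, b) \<in> Q_box" "0 \<le> b" "a \<le> 0"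
  obtains u where "u \<in> admissible_controls" "\<And>t. 0 \<le> t \<Longrightarrow> xi (a, b) u t \<in> Q_box"
proof -
  have box: "-1 \<le> a" "b \<le> 1" using assms(1) by (auto simp: Q_box_def)
  define u where "u = step_control b b (-1) 0 0"
  have adm: "u \<in> admissible_controls" unfolding u_def by (rule step_control_admissible) auto
  have braking: "xi (a, b) u t = (a + (b * t - t^2 / 2), b - t)" if "0 \<le> t" "t \<le> b" for t
  proof -
    have "\<forall>r\<in>{0<..<t}. u r = -1" using that by (auto simp: u_def step_control_def)
    note segment = xi_constant_control[OF adm order.refl that(1) this, of "(a, b)"]
    show ?thesis unfolding xi_def segment by (simp add: algebra_simps)
  qed
  have braking_in_Q: "xi (a, b) u t \<in> Q_box" if "0 \<le> t" "t \<le> b" for t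
    using braking[OF that] braking_distance_bounds[OF that box(2)] box assms(3) that
    by (auto simp: Q_box_def)
  have "xi (a, b) u t \<in> Q_box" if "0 \<le> t" for t
  proof (cases "t \<le> b")
    case False
    then have "xi (a, b) u t = xi (a, b) u b"
      using braking[of b] assms(2) by (intro xi_at_rest[OF adm]) (auto simp: u_def step_control_def xi_def)
    then show ?thesis using braking_in_Q[of b] assms(2) by simp
  qed (use braking_in_Q that in auto)
  with adm show thesis by (rule that)
qed

lemma Q_box_reached_by_reversing:
  assumes "(a, b) \<in> Q_box" "0 \<le> b" "0 \<le> a"
  obtains u where "u \<in> admissible_controls" "\<And>t. 2 * b \<le> t \<Longrightarrow> xi (a, b) u t \<in> Q_box"
proof -
  have box: "a \<le> 1" "b \<le> 1" using assms(1) by (auto simp: Q_box_def)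
  define u where "u = step_control (2 * b) (3 * b) (-1) 1 0"
  have adm: "u \<in> admissible_controls" unfolding u_def by (rule step_control_admissible) (use assms in auto)
  have reversing: "xi (a, b) u t = (a + (b * t - t^2 / 2), b - t)" if "0 \<le> t" "t \<le> 2 * b" for t
  proof -
    have "\<forall>r\<in>{0<..<t}. u r = -1" using that by (auto simp: u_def step_control_def)
    note segment = xi_constant_control[OF adm order.refl that(1) this, of "(a, b)"]
    show ?thesis unfolding xi_def segment by (simp add: algebra_simps)
  qed
  have reversed: "xi1 (a, b) u (2 * b) = a" "xi2 (a, b) u (2 * b) = - b"
    using reversing[of "2 * b"] assms(2) by (auto simp: xi_def power2_eq_square algebra_simps)
  have braking: "xi (a, b) u t = (a - (b * (t - 2 * b) - (t - 2 * b)^2 / 2), (t - 2 * b) - b)"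
    if "2 * b \<le> t" "t \<le> 3 * b" for t
  proof -
    have "\<forall>r\<in>{2 * b<..<t}. u r = 1" using that by (auto simp: u_def step_control_def)
    moreover have "0 \<le> 2 * b" using assms(2) by simp
    note segment = xi_constant_control[OF adm this that(1) \<open>\<forall>r\<in>{2 * b<..<t}. u r = 1\<close>, of "(a, b)"]
    show ?thesis unfolding xi_def segment reversed by (simp add: algebra_simps)
  qed
  have braking_in_Q: "xi (a, b) u t \<in> Q_box" if "2 * b \<le> t" "t \<le> 3 * b" for t
    using braking[OF that] braking_distance_bounds[of "t - 2 * b" b] box assms(3) that
    by (auto simp: Q_box_def)
  have "xi (a, b) u t \<in> Q_box" if "2 * b \<le> t" for t
  proof (cases "t \<le> 3 * b")
    case False
    then have "xi (a, b) u t = xi (a, b) u (3 * b)"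
      using braking[of "3 * b"] assms(2) by (intro xi_at_rest[OF adm]) (auto simp: u_def step_control_def xi_def)
    then show ?thesis using braking_in_Q[of "3 * b"] assms(2) by simp
  qed (use braking_in_Q that in auto)
  with adm show thesis by (rule that)
qed

lemma Q_box_reached_from_upper_half:
  assumes "(a, b) \<in> Q_box" "0 \<le> b"
  obtains u where "u \<in> admissible_controls" "\<And>t. 2 * b \<le> t \<Longrightarrow> xi (a, b) u t \<in> Q_box"
proof (cases "a \<le> 0")
  case True
  then obtain u where "u \<in> admissible_controls" "\<And>t. 0 \<le> t \<Longrightarrow> xi (a, b) u t \<in> Q_box"
    using Q_box_kept_by_braking[OF assms] by blast
  then show thesis using assms(2) by (intro that[of u]) auto
next
  case False
  then have "0 \<le> a" by simp
  then show thesis by (rule Q_box_reached_by_reversing[OF assms]) (rule that)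
qed

lemma uminus_mem_Q_box [simp]: "- x \<in> Q_box \<longleftrightarrow> x \<in> Q_box"
  unfolding Q_box_def by (cases x) auto

lemma Q_box_reached:
  assumes "x \<in> Q_box"
  obtains u where "u \<in> admissible_controls" "\<And>t. 2 \<le> t \<Longrightarrow> xi x u t \<in> Q_box"
proof -
  obtain a b where x: "x = (a, b)" by fastforce
  have box: "(a, b) \<in> Q_box" "(- a, - b) \<in> Q_box" "\<bar>b\<bar> \<le> 1"
    using assms by (auto simp: x Q_box_def)
  show thesis
  proof (cases "0 \<le> b")
    case True
    then obtain u where "u \<in> admissible_controls" "\<And>t. 2 * b \<le> t \<Longrightarrow> xi (a, b) u t \<in> Q_box"
      using Q_box_reached_from_upper_half[OF box(1)] by blast
    then show thesis using box(3) by (intro that[of u]) (auto simp: x)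
  next
    case False
    then have "0 \<le> - b" by simp
    then obtain u where u: "u \<in> admissible_controls"
      and reached: "\<And>t. 2 * - b \<le> t \<Longrightarrow> xi (- a, - b) u t \<in> Q_box"
      using Q_box_reached_from_upper_half[OF box(2)] by blast
    have "xi (a, b) (\<lambda>t. - u t) t = - xi (- a, - b) u t" for t
      using xi_uminus[of "(- a, - b)" u t] by simp
    then show thesis
      using box(3) reached by (intro that[OF admissible_controls_uminus[OF u]]) (auto simp: x)
  qed
qed

lemma controlled_recurrent_2_Q_box: "controlled_recurrent 2 Q_box"
  unfolding controlled_recurrent_def
proof
  fix x assume "x \<in> Q_box"
  then obtain u where "u \<in> admissible_controls" and reached: "\<And>t. 2 \<le> t \<Longrightarrow> xi x u t \<in> Q_box"
    using Q_box_reached by blast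
  moreover have "\<exists>t'\<in>{t..t + 2}. xi x u t' \<in> Q_box" if "0 \<le> t" for t
    using reached[of "max t 2"] that by (intro bexI[of _ "max t 2"]) auto
  ultimately show "\<exists>u\<in>admissible_controls. \<forall>t\<ge>0. \<exists>t'\<in>{t..t + 2}. xi x u t' \<in> Q_box"
    by blast
qed

section \<open>Polynomially many spanning controls\<close>

lemma interval_grid:
  fixes \<delta> :: real
  assumes "0 < \<delta>"
  obtains G where "finite G" "G \<subseteq> {-1..1}" "real (card G) \<le> 2 / \<delta> + 1"
    "\<And>a. a \<in> {-1..1} \<Longrightarrow> \<exists>c\<in>G. \<bar>a - c\<bar> \<le> \<delta>"
proof
  define N where "N = nat \<lfloor>2 / \<delta>\<rfloor>"
  define G where "G = (\<lambda>k. -1 + real k * \<delta>) ` {..N}"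
  have N_le: "real N \<le> 2 / \<delta>" unfolding N_def using assms by (intro of_nat_floor) simp
  then have N: "real N * \<delta> \<le> 2" using assms by (simp add: pos_le_divide_eq)
  show "finite G" unfolding G_def by simp
  have "card G \<le> N + 1" unfolding G_def using card_image_le[of "{..N}"] by simp
  then show "real (card G) \<le> 2 / \<delta> + 1" using N_le by linarith
  show "G \<subseteq> {-1..1}"
  proof
    fix c assume "c \<in> G"
    then obtain k where "k \<le> N" and c: "c = -1 + real k * \<delta>" unfolding G_def by auto
    then have "real k * \<delta> \<le> real N * \<delta>" "0 \<le> real k * \<delta>"
      using assms by (auto intro: mult_right_mono)
    then show "c \<in> {-1..1}" unfolding c atLeastAtMost_iff using N by linarith
  qed
  fix a :: real assume a: "a \<in> {-1..1}"
  define k where "k = nat \<lfloor>(a + 1) / \<delta>\<rfloor>"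
  have "k \<le> N"
    unfolding k_def N_def using a assms by (intro nat_mono floor_mono divide_right_mono) auto
  moreover have "real k \<le> (a + 1) / \<delta>" "(a + 1) / \<delta> < real k + 1"
    using a assms unfolding k_def by (simp_all add: of_nat_floor)
  then have "real k * \<delta> \<le> a + 1" "a + 1 < real k * \<delta> + \<delta>"
    using assms by (simp_all add: pos_le_divide_eq pos_divide_less_eq distrib_right)
  ultimately show "\<exists>c\<in>G. \<bar>a - c\<bar> \<le> \<delta>"
    unfolding G_def by (intro bexI[of _ "-1 + real k * \<delta>"]) auto
qed

lemma xi_close:
  assumes "u \<in> admissible_controls" "0 \<le> t" "\<bar>fst x - fst y\<bar> \<le> \<delta>" "\<bar>snd x - snd y\<bar> \<le> \<delta>"
  shows "xi x u t \<in> nbhd (\<delta> * (1 + t)) {xi y u t}"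
proof -
  have "\<bar>(snd x - snd y) * t\<bar> \<le> \<delta> * t"
    using assms(2,4) by (simp add: abs_mult mult_right_mono)
  then have "\<bar>xi1 x u t - xi1 y u t\<bar> \<le> \<delta> * (1 + t)"
    using xi1_difference[OF assms(1,2), of x y] assms(3) by (simp add: distrib_left)
  moreover have "\<bar>xi2 x u t - xi2 y u t\<bar> \<le> \<delta> * (1 + t)"
  proof -
    have "0 \<le> \<delta>" using assms(4) by linarith
    then have "\<delta> * 1 \<le> \<delta> * (1 + t)" using assms(2) by (intro mult_left_mono) auto
    then show ?thesis using assms(4) unfolding xi2_def by simp
  qed
  ultimately show ?thesis unfolding nbhd_def xi_def by (simp add: abs_minus_commute)
qed

lemma Q_box_grid:
  fixes \<delta> :: real
  assumes "0 < \<delta>"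
  obtains G where "finite G" "G \<subseteq> Q_box" "real (card G) \<le> (2 / \<delta> + 1)^2"
    "\<And>x. x \<in> Q_box \<Longrightarrow> \<exists>c\<in>G. \<bar>fst x - fst c\<bar> \<le> \<delta> \<and> \<bar>snd x - snd c\<bar> \<le> \<delta>"
proof -
  obtain I where I: "finite I" "I \<subseteq> {-1..1}" "real (card I) \<le> 2 / \<delta> + 1"
    and dense: "\<And>a. a \<in> {-1..1} \<Longrightarrow> \<exists>c\<in>I. \<bar>a - c\<bar> \<le> \<delta>"
    using interval_grid[OF assms] by blast
  show thesis
  proof (rule that[of "I \<times> I"])
    show "finite (I \<times> I)" "I \<times> I \<subseteq> Q_box" using I(1,2) unfolding Q_box_def by auto
    show "real (card (I \<times> I)) \<le> (2 / \<delta> + 1)^2"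
      unfolding card_cartesian_product power2_eq_square using I(3) by (simp add: mult_mono)
    fix x assume "x \<in> Q_box"
    then have "fst x \<in> {-1..1}" "snd x \<in> {-1..1}" unfolding Q_box_def by auto
    then obtain c1 c2 where "c1 \<in> I" "\<bar>fst x - c1\<bar> \<le> \<delta>" "c2 \<in> I" "\<bar>snd x - c2\<bar> \<le> \<delta>"
      using dense by meson
    then show "\<exists>c\<in>I \<times> I. \<bar>fst x - fst c\<bar> \<le> \<delta> \<and> \<bar>snd x - snd c\<bar> \<le> \<delta>"
      by (intro bexI[of _ "(c1, c2)"]) auto
  qed
qed

lemma rec_traj_of_close_start:
  assumes "u \<in> admissible_controls" "\<forall>t\<ge>0. \<exists>t'\<in>{t..t + 2}. xi c u t' \<in> Q"
    and "\<bar>fst x - fst c\<bar> \<le> \<delta>" "\<bar>snd x - snd c\<bar> \<le> \<delta>" "\<delta> * (1 + T) \<le> \<epsilon>" "2 \<le> \<tau>"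
  shows "rec_traj T \<epsilon> \<tau> Q x u"
  unfolding rec_traj_def
proof
  fix t assume t: "t \<in> {0..T - \<tau>}"
  then obtain t' where t': "t' \<in> {t..t + 2}" "xi c u t' \<in> Q"
    using assms(2) by auto
  have "0 \<le> t'" "t' \<le> T" "0 \<le> \<delta>" using t t' assms(4,6) by auto
  have "xi x u t' \<in> nbhd (\<delta> * (1 + t')) {xi c u t'}"
    by (rule xi_close[OF assms(1) \<open>0 \<le> t'\<close> assms(3,4)])
  also have "\<dots> \<subseteq> nbhd \<epsilon> Q"
  proof (rule nbhd_mono)
    have "\<delta> * (1 + t') \<le> \<delta> * (1 + T)" using \<open>t' \<le> T\<close> \<open>0 \<le> \<delta>\<close> by (intro mult_left_mono) auto
    then show "\<delta> * (1 + t') \<le> \<epsilon>" using assms(5) by linarith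
  qed (use t'(2) in blast)
  finally show "\<exists>t'\<in>{t..t + \<tau>}. xi x u t' \<in> nbhd \<epsilon> Q"
    using t'(1) assms(6) by (intro bexI[of _ t']) auto
qed

lemma r_rec_le_card:
  assumes "finite S" "S \<subseteq> admissible_controls" "\<forall>x\<in>Q. \<exists>u\<in>S. rec_traj T \<epsilon> \<tau> Q x u"
  shows "r_rec T \<epsilon> \<tau> Q \<le> enat (card S)"
  unfolding r_rec_def using assms by (intro INF_lower2[of S]) (auto simp: ecard_def)

lemma r_rec_Q_box_polynomial:
  assumes "0 < \<epsilon>" "2 \<le> \<tau>" "0 \<le> T"
  shows "\<exists>k. r_rec T \<epsilon> \<tau> Q_box = enat k \<and> real k \<le> (2 * (T + 1) / \<epsilon> + 1)^2"
proof -
  have "\<forall>c\<in>Q_box. \<exists>u. u \<in> admissible_controls \<and> (\<forall>t\<ge>0. \<exists>t'\<in>{t..t + 2}. xi c u t' \<in> Q_box)"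
    using controlled_recurrent_2_Q_box unfolding controlled_recurrent_def by blast
  then obtain ctrl where ctrl: "\<forall>c\<in>Q_box. ctrl c \<in> admissible_controls \<and>
      (\<forall>t\<ge>0. \<exists>t'\<in>{t..t + 2}. xi c (ctrl c) t' \<in> Q_box)"
    by (rule bchoice[THEN exE])
  define \<delta> where "\<delta> = \<epsilon> / (T + 1)"
  have \<delta>: "0 < \<delta>" "\<delta> * (1 + T) = \<epsilon>" using assms by (simp_all add: \<delta>_def add.commute)
  obtain G where G: "finite G" "G \<subseteq> Q_box" "real (card G) \<le> (2 / \<delta> + 1)^2"
    and near: "\<And>x. x \<in> Q_box \<Longrightarrow> \<exists>c\<in>G. \<bar>fst x - fst c\<bar> \<le> \<delta> \<and> \<bar>snd x - snd c\<bar> \<le> \<delta>"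
    using Q_box_grid[OF \<delta>(1)] by blast
  have "\<exists>u\<in>ctrl ` G. rec_traj T \<epsilon> \<tau> Q_box x u" if x: "x \<in> Q_box" for x
  proof -
    obtain c where c: "c \<in> G" "\<bar>fst x - fst c\<bar> \<le> \<delta>" "\<bar>snd x - snd c\<bar> \<le> \<delta>"
      using near[OF x] by blast
    then have "rec_traj T \<epsilon> \<tau> Q_box x (ctrl c)"
      using ctrl G(2) \<delta>(2) assms(2) by (intro rec_traj_of_close_start) auto
    with c(1) show ?thesis by blast
  qed
  moreover have "ctrl ` G \<subseteq> admissible_controls" using ctrl G(2) by auto
  ultimately have "r_rec T \<epsilon> \<tau> Q_box \<le> enat (card (ctrl ` G))"
    using G(1) by (intro r_rec_le_card) auto
  then obtain k where k: "r_rec T \<epsilon> \<tau> Q_box = enat k" "k \<le> card (ctrl ` G)"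
    using enat_ile by fastforce
  have "real k \<le> real (card G)" using k(2) card_image_le[OF G(1), of ctrl] by linarith
  also have "\<dots> \<le> (2 / \<delta> + 1)^2" by (rule G(3))
  also have "2 / \<delta> = 2 * (T + 1) / \<epsilon>" using assms by (simp add: \<delta>_def)
  finally show ?thesis using k(1) by blast
qed

lemma Limsup_log_growth_eq_0:
  fixes n :: "real \<Rightarrow> enat" and B :: "real \<Rightarrow> real"
  assumes "\<forall>\<^sub>F T in at_top. \<exists>k. n T = enat k \<and> real k \<le> B T"
    and "\<forall>\<^sub>F T in at_top. 1 \<le> B T"
    and "((\<lambda>T. log 2 (B T) / T) \<longlongrightarrow> 0) at_top"
  shows "Limsup at_top (\<lambda>T. ereal (1 / T) * elog2 (n T)) = 0"
proof (rule lim_imp_Limsup)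
  have bounds: "0 \<le> ereal (1 / T) * elog2 (n T) \<and> ereal (1 / T) * elog2 (n T) \<le> ereal (log 2 (B T) / T)"
    if "0 < T \<and> (\<exists>k. n T = enat k \<and> real k \<le> B T) \<and> 1 \<le> B T" for T
  proof -
    from that obtain k where T: "0 < T" "n T = enat k" "real k \<le> B T" "1 \<le> B T" by blast
    have "0 \<le> log 2 (real k) \<and> log 2 (real k) \<le> log 2 (B T)"
    proof (cases "k = 0")
      case True
      \<comment> \<open>junk value \<open>log 2 0 = 0\<close>\<close>
      then show ?thesis using T(4) by (simp add: log_def)
    qed (use T in auto)
    then have "0 \<le> log 2 (real k) / T \<and> log 2 (real k) / T \<le> log 2 (B T) / T"
      using T(1) by (auto intro: divide_right_mono)
    then show ?thesis using T(2) by (simp add: elog2_def)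
  qed
  have eventually_bounds: "\<forall>\<^sub>F T in at_top. 0 < T \<and> (\<exists>k. n T = enat k \<and> real k \<le> B T) \<and> 1 \<le> B T"
    using eventually_gt_at_top[of 0] assms(1,2) by (intro eventually_conj)
  show "((\<lambda>T. ereal (1 / T) * elog2 (n T)) \<longlongrightarrow> 0) at_top"
  proof (rule tendsto_sandwich[OF _ _ tendsto_const])
    show "\<forall>\<^sub>F T in at_top. 0 \<le> ereal (1 / T) * elog2 (n T)"
      using eventually_bounds by (rule eventually_mono) (rule bounds[THEN conjunct1])
    show "\<forall>\<^sub>F T in at_top. ereal (1 / T) * elog2 (n T) \<le> ereal (log 2 (B T) / T)"
      using eventually_bounds by (rule eventually_mono) (rule bounds[THEN conjunct2])
    show "((\<lambda>T. ereal (log 2 (B T) / T)) \<longlongrightarrow> 0) at_top"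
      using tendsto_ereal[OF assms(3)] by (simp add: zero_ereal_def)
  qed
qed simp

lemma h_rec_Q_box_eq_0:
  assumes "2 \<le> \<tau>"
  shows "h_rec \<tau> Q_box = 0"
  unfolding h_rec_def
proof (rule tendsto_Lim)
  have Limsup_zero: "Limsup at_top (\<lambda>T. ereal (1 / T) * elog2 (r_rec T \<epsilon> \<tau> Q_box)) = 0"
    if "0 < \<epsilon>" for \<epsilon>
  proof (rule Limsup_log_growth_eq_0[where B = "\<lambda>T. (2 * (T + 1) / \<epsilon> + 1)^2"])
    show "\<forall>\<^sub>F T in at_top. \<exists>k. r_rec T \<epsilon> \<tau> Q_box = enat k \<and> real k \<le> (2 * (T + 1) / \<epsilon> + 1)^2"
      using eventually_ge_at_top[of 0] by (rule eventually_mono) (rule r_rec_Q_box_polynomial[OF that assms])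
    show "\<forall>\<^sub>F T in at_top. 1 \<le> (2 * (T + 1) / \<epsilon> + 1)^2"
      using eventually_ge_at_top[of 0] by (rule eventually_mono) (use that in simp)
    show "((\<lambda>T. log 2 ((2 * (T + 1) / \<epsilon> + 1)^2) / T) \<longlongrightarrow> 0) at_top"
      using that by real_asymp
  qed
  have "\<forall>\<^sub>F \<epsilon> in at_right 0. Limsup at_top (\<lambda>T. ereal (1 / T) * elog2 (r_rec T \<epsilon> \<tau> Q_box)) = 0"
    using eventually_at_right_less[of 0] by (rule eventually_mono) (rule Limsup_zero)
  then show "((\<lambda>\<epsilon>. Limsup at_top (\<lambda>T. ereal (1 / T) * elog2 (r_rec T \<epsilon> \<tau> Q_box))) \<longlongrightarrow> 0) (at_right 0)"
    by (rule tendsto_eventually)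
qed simp

theorem mainTheorem6:
  shows "\<not> controlled_invariant Q_box
    \<and> (\<forall>\<tau>::real. \<tau> < 2 \<longrightarrow> \<not> controlled_recurrent \<tau> Q_box)
    \<and> h_inv Q_box = \<infinity>
    \<and> (\<forall>\<tau>::real. \<tau> < 2 \<longrightarrow> h_rec \<tau> Q_box = \<infinity>)
    \<and> controlled_recurrent 2 Q_box
    \<and> (\<forall>\<tau>::real. \<tau> \<ge> 2 \<longrightarrow> h_rec \<tau> Q_box \<le> ereal (2 / ln 2))"
  using not_controlled_invariant_Q_box not_controlled_recurrent_Q_box h_inv_Q_box_infinite
    h_rec_Q_box_infinite controlled_recurrent_2_Q_box h_rec_Q_box_eq_0
  by simp

end
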